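(* Let $g:\mathbb{R}^N\to\mathbb{R}\cup\{+\infty\}$ be proper and lower semi-continuous, and let $f:\mathbb{R}^N\to\mathbb{R}$ be continuously differentiable such that, for some $\mathbf{L}\in\mathbb{S}_{++}(N)$, the gradient of $f\circ\mathbf{L}^{-1/2}$ is $1$-Lipschitz continuous; assume $f+g$ is bounded from below. Suppose moreover that $f(x)=\frac12\langle x,\mathbf{H}x\rangle+\langle b,x\rangle+c$ with $\mathbf{H}\in\mathbb{S}_{++}(N)$, $b\in\mathbb{R}^N$, $c\in\mathbb{R}$. Let $x_k\in\mathbb{R}^N$, let $\mathbf{D}\in\mathbb{R}^{N\times R}$ have linearly independent columns, and for $\boldsymbol\beta\in\mathbb{R}^R$ put $y^{(\boldsymbol\beta)}:=x_k+\mathbf{D}\boldsymbol\beta$. Let $\mathbf{T}\in\mathbb{S}_{++}(N)$ be such that $\mathbf{M}:=\mathbf{T}-\mathbf{H}\in\mathbb{S}_{++}(N)$, and consider the problem $$\min_{x\in\mathbb{R}^N}\min_{\boldsymbol\beta\in\mathbb{R}^R}\ \ell(x;y^{(\boldsymbol\beta)})+\tfrac12\|x-y^{(\boldsymbol\beta)}\|_{\mathbf{T}}^2,\qquad \ell(x;y):=g(x)+f(y)+\langle\nabla f(y),x-y\rangle. \quad (\ast)$$ Then, for each fixed $x$, the inner minimization over $\boldsymbol\beta$ is solved by $$\boldsymbol\beta^*=(\mathbf{D}^\top\mathbf{M}\mathbf{D})^{-1}\mathbf{D}^\top\mathbf{M}(x-x_k).$$ Moreover, problem $(\ast)$ is equivalent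 to $$x_{k+1}\in\operatorname*{argmin}_{x\in\mathbb{R}^N}\ g(x)+\tfrac12\big\|x-x_k+\mathbf{Q}^{-1}\nabla f(x_k)\big\|_{\mathbf{Q}}^2,$$ (i.e. the $x$-components of minimizers of $(\ast)$ are exactly the minimizers of this problem), where $$\mathbf{Q}:=\mathbf{T}-\mathbf{U}^\top\mathbf{U}\in\mathbb{S}_{++}(N),\qquad \mathbf{U}:=(\mathbf{D}^\top\mathbf{M}\mathbf{D})^{-1/2}\mathbf{D}^\top\mathbf{M},$$ $\mathbf{U}^\top\mathbf{U}$ has rank $R$, and $$\mathbf{Q}^{-1}=\mathbf{T}^{-1}+\mathbf{T}^{-1}\mathbf{U}^\top(\mathbf{I}-\mathbf{U}\mathbf{T}^{-1}\mathbf{U}^\top)^{-1}\mathbf{U}\mathbf{T}^{-1}.$$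
   Context: $\mathbb{S}_{+}(N)$ (resp. $\mathbb{S}_{++}(N)$) denotes the set of symmetric positive semi-definite (resp. positive definite) $N\times N$ real matrices. For a matrix $\mathbf{V}$, $\|x\|_{\mathbf{V}}^2:=\langle x,\mathbf{V}x\rangle$ and $\langle x,y\rangle_{\mathbf{V}}:=\langle x,\mathbf{V}y\rangle$, with $\langle\cdot,\cdot\rangle$ the standard Euclidean inner product. $\mathbf{I}$ is the identity matrix. *)

theory Defs
  imports "HOL-Analysis.Analysis"
begin

definition psd :: "real^'n^'n \<Rightarrow> bool" where
  "psd A \<longleftrightarrow> transpose A = A \<and> (\<forall>x. 0 \<le> x \<bullet> (A *v x))"

definition spd :: "real^'n^'n \<Rightarrow> bool" where
  "spd A \<longleftrightarrow> transpose A = A \<and> (\<forall>x. x \<noteq> 0 \<longrightarrow> 0 < x \<bullet> (A *v x))"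

definition qnorm2 :: "real^'n^'n \<Rightarrow> real^'n \<Rightarrow> real" where
  "qnorm2 V x = x \<bullet> (V *v x)"

definition msqrt :: "real^'n^'n \<Rightarrow> real^'n^'n" where
  "msqrt A = (THE B. psd B \<and> B ** B = A)"

definition minvsqrt :: "real^'n^'n \<Rightarrow> real^'n^'n" where
  "minvsqrt A = matrix_inv (msqrt A)"

definition grad :: "(real^'n \<Rightarrow> real) \<Rightarrow> real^'n \<Rightarrow> real^'n" where
  "grad f x = (\<chi> i. frechet_derivative f (at x) (axis i 1))"

definition proper_fun :: "('a \<Rightarrow> ereal) \<Rightarrow> bool" where
  "proper_fun g \<longleftrightarrow> (\<forall>x. g x \<noteq> -\<infinity>) \<and> (\<exists>x. g x \<noteq> \<infinity>)"

definition lsc :: "('a::topological_space \<Rightarrow> ereal) \<Rightarrow> bool" where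
  "lsc g \<longleftrightarrow> (\<forall>x. g x \<le> Liminf (at x) g)"

end

(*
  Because f is quadratic, the linearised model plus the T-proximal term at y equals
  f x + 1/2 |x - y|_M^2 with M = T - H. Minimising over y = x_k + D beta is an M-weighted
  least-squares problem: beta* gives the M-orthogonal projection of x - x_k onto the range
  of D, and by Pythagoras the residual splits into |x - x_k|_M^2 - |x - x_k|_(U^T U)^2 plus
  the nonnegative |D (beta* - beta)|_M^2. Completing the square in what remains,
  f x + 1/2 |x - x_k|_(M - U^T U)^2, yields the Q-weighted proximal problem up to a constant.
  Q = H + (M - U^T U) is positive definite since M - U^T U is positive semidefinite, and its
  inverse is given by the Woodbury identity. The symmetric square root entering U is
  obtained from the spectral theorem.
*)
theory Submission
  imports Defs
begin

lemma inner_matrix_vector_transpose: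
  fixes A :: "real^'a^'b"
  shows "x \<bullet> (A *v y) = (transpose A *v x) \<bullet> y"
  by (metis dot_lmul_matrix transpose_matrix_vector)

lemma inner_transpose_matrix_vector:
  fixes A :: "real^'a^'b"
  shows "x \<bullet> (transpose A *v y) = (A *v x) \<bullet> y"
  by (metis inner_matrix_vector_transpose transpose_transpose)

lemma symmetric_matrix_inner:
  fixes A :: "real^'m^'m"
  assumes "transpose A = A"
  shows "x \<bullet> (A *v y) = y \<bullet> (A *v x)"
  by (metis assms inner_commute inner_matrix_vector_transpose)

lemma symmetric_matrixI:
  fixes A :: "real^'m^'m"
  assumes "\<And>x y. y \<bullet> (A *v x) = x \<bullet> (A *v y)"
  shows "transpose A = A"
proof -
  have "A $ i $ j = axis i 1 \<bullet> (A *v axis j 1)" for i j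
    by (simp add: matrix_vector_mult_basis inner_axis' column_def)
  then show ?thesis
    unfolding transpose_def by (simp add: vec_eq_iff) (metis assms)
qed

lemma qnorm2_add:
  fixes Q :: "real^'m^'m"
  assumes "transpose Q = Q"
  shows "qnorm2 Q (u + w) = qnorm2 Q u + 2 * (w \<bullet> (Q *v u)) + qnorm2 Q w"
  using symmetric_matrix_inner[OF assms, of u w]
  by (simp add: qnorm2_def matrix_vector_right_distrib inner_add_left inner_add_right)

lemma partial_minimization:
  fixes Phi :: "'a \<Rightarrow> 'b \<Rightarrow> ereal" and P :: "'a \<Rightarrow> ereal" and r :: "'a \<Rightarrow> 'b \<Rightarrow> real"
  assumes Phi: "\<And>x \<beta>. Phi x \<beta> = P x + ereal (C + r x \<beta>)"
    and r: "\<And>x \<beta>. 0 \<le> r x \<beta>" and opt: "\<And>x. r x (opt x) = 0"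
  shows "Phi x (opt x) \<le> Phi x \<beta>"
    and "(\<exists>\<beta>. \<forall>x' \<beta>'. Phi x \<beta> \<le> Phi x' \<beta>') \<longleftrightarrow> (\<forall>x'. P x \<le> P x')"
proof -
  have lower: "P x + ereal C \<le> Phi x \<beta>" for x \<beta>
    unfolding Phi using r[of x \<beta>] by (intro add_left_mono) simp
  have attained: "Phi x (opt x) = P x + ereal C" for x
    unfolding Phi opt by simp
  show "Phi x (opt x) \<le> Phi x \<beta>"
    unfolding attained by (rule lower)
  show "(\<exists>\<beta>. \<forall>x' \<beta>'. Phi x \<beta> \<le> Phi x' \<beta>') \<longleftrightarrow> (\<forall>x'. P x \<le> P x')"
  proof
    assume "\<exists>\<beta>. \<forall>x' \<beta>'. Phi x \<beta> \<le> Phi x' \<beta>'"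
    then obtain \<beta> where "\<And>x' \<beta>'. Phi x \<beta> \<le> Phi x' \<beta>'" by blast
    then have "P x + ereal C \<le> P x' + ereal C" for x'
      using lower[of x \<beta>] attained[of x'] by (metis order_trans)
    then show "\<forall>x'. P x \<le> P x'" by (simp add: ereal_add_le_add_iff2)
  next
    assume "\<forall>x'. P x \<le> P x'"
    then have "Phi x (opt x) \<le> Phi x' \<beta>'" for x' \<beta>'
      unfolding attained using lower[of x' \<beta>'] by (metis add_right_mono order_trans)
    then show "\<exists>\<beta>. \<forall>x' \<beta>'. Phi x \<beta> \<le> Phi x' \<beta>'" by blast
  qed
qed

subsection \<open>Spectral theorem for symmetric real matrices\<close>

lemma linear_plus_quadratic_nonpos_imp_zero:
  fixes a c :: real
  assumes "\<And>t. t * a + t\<^sup>2 * c \<le> 0"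
  shows "a = 0"
proof (rule ccontr)
  assume "a \<noteq> 0"
  define t where "t = a / (\<bar>c\<bar> + 1)"
  have "t\<^sup>2 * (- \<bar>c\<bar>) \<le> t\<^sup>2 * c" by (rule mult_left_mono) auto
  moreover have "t\<^sup>2 * \<bar>c\<bar> < t * a"
  proof -
    have "t\<^sup>2 * \<bar>c\<bar> = (t * a) * (\<bar>c\<bar> / (\<bar>c\<bar> + 1))"
      unfolding t_def by (simp add: power2_eq_square field_simps)
    moreover have "0 < a * a" using \<open>a \<noteq> 0\<close> by (simp add: zero_less_mult_iff) linarith
    then have "t * a > 0" unfolding t_def by (simp add: add_pos_nonneg)
    moreover have "0 < \<bar>c\<bar> + 1" by simp
    ultimately show ?thesis by (simp add: pos_divide_less_eq algebra_simps)
  qed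
  ultimately show False using assms[of t] by linarith
qed

lemma quadratic_form_max_on_subspace:
  fixes A :: "real^'m^'m"
  assumes "subspace S" and "S \<noteq> {0}"
  obtains v where "v \<in> S" "norm v = 1" "\<And>x. x \<in> S \<Longrightarrow> x \<bullet> (A *v x) \<le> (v \<bullet> (A *v v)) * (x \<bullet> x)"
proof -
  define K where "K = S \<inter> sphere 0 1"
  have "compact K" unfolding K_def
    using closed_subspace[OF assms(1)] by (simp add: closed_Int_compact)
  obtain s where s: "s \<in> S" "s \<noteq> 0" using assms subspace_0 by blast
  then have "(1 / norm s) *\<^sub>R s \<in> K" using assms(1) unfolding K_def by (simp add: subspace_scale)
  moreover have "continuous_on K (\<lambda>x. x \<bullet> (A *v x))" by (intro continuous_intros)
  ultimately obtain v where v: "v \<in> K" and vmax: "\<And>x. x \<in> K \<Longrightarrow> x \<bullet> (A *v x) \<le> v \<bullet> (A *v v)"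
    using continuous_attains_sup[OF \<open>compact K\<close>] by blast
  have "x \<bullet> (A *v x) \<le> (v \<bullet> (A *v v)) * (x \<bullet> x)" if "x \<in> S" for x
  proof (cases "x = 0")
    case False
    have "(1 / norm x) *\<^sub>R x \<in> K" using that False assms(1) unfolding K_def by (simp add: subspace_scale)
    from vmax[OF this] have "x \<bullet> (A *v x) / (norm x)\<^sup>2 \<le> v \<bullet> (A *v v)"
      by (simp add: matrix_vector_mult_scaleR power2_eq_square)
    with False show ?thesis by (simp add: divide_le_eq power2_norm_eq_inner)
  qed simp
  then show thesis using that v unfolding K_def by auto
qed

text \<open>A maximiser of the Rayleigh quotient over an invariant subspace is an eigenvector: the
  quadratic form along \<open>v + t w\<close>, with \<open>w\<close> the residual \<open>A v - \<mu> v\<close>, would otherwise exceed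
  its maximum for small \<open>t\<close>.\<close>
lemma rayleigh_maximizer_eigenvector:
  fixes A :: "real^'m^'m"
  assumes sym: "transpose A = A" and S: "subspace S" and inv: "\<And>x. x \<in> S \<Longrightarrow> A *v x \<in> S"
    and v: "v \<in> S" "norm v = 1"
    and vmax: "\<And>x. x \<in> S \<Longrightarrow> x \<bullet> (A *v x) \<le> (v \<bullet> (A *v v)) * (x \<bullet> x)"
  shows "A *v v = (v \<bullet> (A *v v)) *\<^sub>R v"
proof -
  define \<mu> where "\<mu> = v \<bullet> (A *v v)"
  define w where "w = A *v v - \<mu> *\<^sub>R v"
  have vv: "v \<bullet> v = 1" using v by (simp add: norm_eq_1)
  have wS: "w \<in> S" unfolding w_def using inv v S by (simp add: subspace_diff subspace_scale)
  have wv: "w \<bullet> v = 0" unfolding w_def \<mu>_def using vv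
    by (simp add: inner_diff_left inner_diff_right inner_commute)
  have wAv: "w \<bullet> (A *v v) = w \<bullet> w"
    using wv unfolding w_def by (simp add: inner_diff_right inner_diff_left inner_commute)
  have "t * (2 * (w \<bullet> w)) + t\<^sup>2 * (w \<bullet> (A *v w) - \<mu> * (w \<bullet> w)) \<le> 0" for t
  proof -
    have "v + t *\<^sub>R w \<in> S" using v wS S by (simp add: subspace_add subspace_scale)
    from vmax[OF this] show ?thesis
      using vv wv wAv symmetric_matrix_inner[OF sym, of v w] unfolding \<mu>_def
      by (simp add: matrix_vector_right_distrib matrix_vector_mult_scaleR inner_add_left
          inner_add_right inner_commute power2_eq_square algebra_simps)
  qed
  then have "2 * (w \<bullet> w) = 0" by (rule linear_plus_quadratic_nonpos_imp_zero)
  then show ?thesis unfolding w_def \<mu>_def by simp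
qed

lemma symmetric_matrix_invariant_orthonormal_eigenbasis:
  fixes A :: "real^'m^'m"
  assumes sym: "transpose A = A"
  shows "subspace S \<Longrightarrow> (\<And>x. x \<in> S \<Longrightarrow> A *v x \<in> S) \<Longrightarrow>
    \<exists>B. B \<subseteq> S \<and> finite B \<and> pairwise orthogonal B \<and> span B = S \<and>
        (\<forall>b\<in>B. norm b = 1 \<and> A *v b = (b \<bullet> (A *v b)) *\<^sub>R b)"
proof (induction "dim S" arbitrary: S rule: less_induct)
  case less
  show ?case
  proof (cases "S = {0}")
    case True
    then show ?thesis by (intro exI[of _ "{}"]) auto
  next
    case False
    obtain v where v: "v \<in> S" "norm v = 1" and Av: "A *v v = (v \<bullet> (A *v v)) *\<^sub>R v"
      using quadratic_form_max_on_subspace[OF less.prems(1) False]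
        rayleigh_maximizer_eigenvector[OF sym less.prems] by metis
    have vv: "v \<bullet> v = 1" using v by (simp add: norm_eq_1)
    define S' where "S' = {x\<in>S. v \<bullet> x = 0}"
    have S': "subspace S'" unfolding S'_def using less.prems(1)
      by (auto simp: subspace_def inner_add_right)
    have "A *v x \<in> S'" if "x \<in> S'" for x
      using that less.prems(2) symmetric_matrix_inner[OF sym, of v x] Av unfolding S'_def
      by (metis (mono_tags, lifting) inner_commute inner_scaleR_left mem_Collect_eq mult_zero_right)
    moreover have "dim S' < dim S"
    proof (rule dim_psubset)
      have "v \<notin> S'" using vv unfolding S'_def by auto
      then have "S' \<subset> S" using v unfolding S'_def by blast
      then show "span S' \<subset> span S" using S' less.prems(1) by (simp add: span_eq_iff[THEN iffD2])
    qed
    ultimately obtain B' where B': "B' \<subseteq> S'" "finite B'" "pairwise orthogonal B'" "span B' = S'"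
      "\<forall>b\<in>B'. norm b = 1 \<and> A *v b = (b \<bullet> (A *v b)) *\<^sub>R b"
      using less.hyps[OF _ S'] by blast
    have "x \<in> span (insert v B')" if "x \<in> S" for x
    proof -
      have "x - (v \<bullet> x) *\<^sub>R v \<in> span B'"
        using B'(4) that v vv less.prems(1) unfolding S'_def
        by (simp add: subspace_diff subspace_scale inner_diff_right)
      then have "(x - (v \<bullet> x) *\<^sub>R v) + (v \<bullet> x) *\<^sub>R v \<in> span (insert v B')"
        by (meson span_add span_base span_mono span_scale insertI1 subset_insertI subsetD)
      then show ?thesis by simp
    qed
    moreover have "insert v B' \<subseteq> S" using B'(1) v unfolding S'_def by auto
    ultimately have "span (insert v B') = S"
      using span_minimal[OF _ less.prems(1)] by blast
    moreover have "pairwise orthogonal (insert v B')"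
      using B'(1,3) orthogonal_commute unfolding pairwise_insert S'_def orthogonal_def by blast
    ultimately show ?thesis
      using B' v Av \<open>insert v B' \<subseteq> S\<close> by (intro exI[of _ "insert v B'"]) auto
  qed
qed

lemma symmetric_matrix_orthonormal_eigenbasis:
  fixes A :: "real^'m^'m"
  assumes "transpose A = A"
  obtains B where "finite B" "pairwise orthogonal B" "span B = UNIV"
    "\<And>b. b \<in> B \<Longrightarrow> norm b = 1" "\<And>b. b \<in> B \<Longrightarrow> A *v b = (b \<bullet> (A *v b)) *\<^sub>R b"
  using symmetric_matrix_invariant_orthonormal_eigenbasis[OF assms, of UNIV] by auto

subsection \<open>Square roots of positive semidefinite matrices\<close>

lemma psd_symmetric: "psd A \<Longrightarrow> transpose A = A"
  by (simp add: psd_def)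

lemma spd_imp_psd: "spd A \<Longrightarrow> psd A"
  unfolding spd_def psd_def by (metis inner_zero_left matrix_vector_mult_0_right order_le_less)

lemma psd_root_on_eigenvector:
  fixes B :: "real^'m^'m"
  assumes B: "psd B" and eig: "B *v (B *v b) = l *\<^sub>R b" and l: "l \<ge> 0"
  shows "B *v b = sqrt l *\<^sub>R b"
proof -
  define s where "s = sqrt l"
  have s: "s \<ge> 0" "s * s = l" using l unfolding s_def by (auto simp: real_sqrt_mult_self)
  define w where "w = B *v b - s *\<^sub>R b"
  have "B *v w + s *\<^sub>R w = 0" unfolding w_def using eig s
    by (simp add: matrix_vector_mult_diff_distrib matrix_vector_mult_scaleR algebra_simps scaleR_diff_right)
  then have z: "w \<bullet> (B *v w) + s * (w \<bullet> w) = 0"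
    by (metis inner_add_right inner_scaleR_right inner_zero_right)
  have "w \<bullet> (B *v w) \<ge> 0" using B unfolding psd_def by simp
  show ?thesis
  proof (cases "s = 0")
    case False
    with z \<open>w \<bullet> (B *v w) \<ge> 0\<close> s have "w \<bullet> w = 0"
      by (smt (verit) inner_ge_zero mult_pos_pos)
    then show ?thesis unfolding w_def s_def by simp
  next
    case True
    with eig s have "B *v (B *v b) = 0" by simp
    then have "(B *v b) \<bullet> (B *v b) = 0"
      using symmetric_matrix_inner[OF psd_symmetric[OF B], of "B *v b" b] by simp
    with True show ?thesis unfolding s_def by simp
  qed
qed

lemma psd_root_exists:
  fixes A :: "real^'m^'m"
  assumes A: "psd A"
  obtains B where "psd B" "B ** B = A"
proof -
  obtain E where E: "finite E" "pairwise orthogonal E" "span E = UNIV"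
    and unit: "\<And>b. b \<in> E \<Longrightarrow> norm b = 1" and eig: "\<And>b. b \<in> E \<Longrightarrow> A *v b = (b \<bullet> (A *v b)) *\<^sub>R b"
    using symmetric_matrix_orthonormal_eigenbasis[OF psd_symmetric[OF A]] by blast
  define ev where "ev b = b \<bullet> (A *v b)" for b
  have ev: "ev b \<ge> 0" for b using A unfolding psd_def ev_def by simp
  have orthonormal: "b \<bullet> b' = (if b = b' then 1 else 0)" if "b \<in> E" "b' \<in> E" for b b'
    using E(2) unit that unfolding pairwise_def orthogonal_def by (auto simp: norm_eq_1)
  define h where "h x = (\<Sum>b\<in>E. (sqrt (ev b) * (b \<bullet> x)) *\<^sub>R b)" for x
  have "linear h"
    unfolding linear_iff h_def
    by (simp add: inner_add_right scaleR_add_left sum.distrib algebra_simps scaleR_sum_right)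
  define B where "B = matrix h"
  have Bv: "B *v x = h x" for x
    unfolding B_def using \<open>linear h\<close> by (simp add: matrix_works)
  have hb: "h b = sqrt (ev b) *\<^sub>R b" if "b \<in> E" for b
  proof -
    have "h b = (\<Sum>b'\<in>E. if b' = b then sqrt (ev b) *\<^sub>R b else 0)"
      unfolding h_def by (rule sum.cong) (auto simp: orthonormal that)
    then show ?thesis using that E(1) by (simp add: sum.delta')
  qed
  have inner_h: "y \<bullet> h x = (\<Sum>b\<in>E. sqrt (ev b) * (b \<bullet> x) * (b \<bullet> y))" for x y
    unfolding h_def by (simp add: inner_sum_right inner_commute mult.assoc)
  have "psd B"
    unfolding psd_def
  proof
    show "transpose B = B"
      by (rule symmetric_matrixI) (simp add: Bv inner_h mult.commute mult.left_commute)
    show "\<forall>x. 0 \<le> x \<bullet> (B *v x)"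
      by (auto simp: Bv inner_h mult.assoc ev intro!: sum_nonneg)
  qed
  moreover have "B *v (B *v x) = A *v x" for x
  proof (rule linear_eq_on_span[of "\<lambda>x. B *v (B *v x)" "(*v) A" E])
    fix b assume "b \<in> E"
    then show "B *v (B *v b) = A *v b"
      using eig ev unfolding ev_def[symmetric]
      by (simp add: Bv hb linear_cmul[OF \<open>linear h\<close>] real_sqrt_mult_self)
  qed (simp_all add: E(3) linear_compose[unfolded o_def])
  then have "B ** B = A" by (simp add: matrix_eq matrix_vector_mul_assoc[symmetric])
  ultimately show thesis by (rule that)
qed

lemma psd_root_unique:
  fixes B C :: "real^'m^'m"
  assumes B: "psd B" and C: "psd C" and BC: "B ** B = C ** C"
  shows "B = C"
proof -
  have "transpose (B ** B) = B ** B"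
    by (simp add: matrix_transpose_mul psd_symmetric[OF B])
  then obtain E where E: "span E = UNIV"
    and eig: "\<And>b. b \<in> E \<Longrightarrow> (B ** B) *v b = (b \<bullet> ((B ** B) *v b)) *\<^sub>R b"
    using symmetric_matrix_orthonormal_eigenbasis by metis
  have "B *v x = C *v x" for x
  proof (rule linear_eq_on_span[of "(*v) B" "(*v) C" E])
    fix b assume "b \<in> E"
    define l where "l = b \<bullet> ((B ** B) *v b)"
    have "l = (B *v b) \<bullet> (B *v b)"
      using symmetric_matrix_inner[OF psd_symmetric[OF B], of b "B *v b"]
      unfolding l_def by (simp add: matrix_vector_mul_assoc[symmetric] inner_commute)
    then have "l \<ge> 0" by simp
    moreover have "B *v (B *v b) = l *\<^sub>R b" "C *v (C *v b) = l *\<^sub>R b"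
      using eig[OF \<open>b \<in> E\<close>] BC unfolding l_def by (simp_all add: matrix_vector_mul_assoc)
    ultimately show "B *v b = C *v b"
      using psd_root_on_eigenvector B C by metis
  qed (simp_all add: E)
  then show ?thesis by (simp add: matrix_eq)
qed

lemma msqrt:
  fixes A :: "real^'m^'m"
  assumes "psd A"
  shows "psd (msqrt A)" and "msqrt A ** msqrt A = A"
proof -
  have "\<exists>!B. psd B \<and> B ** B = A"
    using psd_root_exists[OF assms] psd_root_unique by metis
  from theI'[OF this] show "psd (msqrt A)" "msqrt A ** msqrt A = A"
    unfolding msqrt_def by auto
qed

lemma matrix_inv_right:
  fixes A :: "real^'m^'m"
  assumes "invertible A"
  shows "A ** matrix_inv A = mat 1"
  using someI_ex[OF assms[unfolded invertible_def]] unfolding matrix_inv_def by blast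

lemma matrix_inv_left:
  fixes A :: "real^'m^'m"
  assumes "invertible A"
  shows "matrix_inv A ** A = mat 1"
  using someI_ex[OF assms[unfolded invertible_def]] unfolding matrix_inv_def by blast

lemma matrix_inv_right_vec:
  fixes A :: "real^'m^'m"
  assumes "invertible A"
  shows "A *v (matrix_inv A *v y) = y"
  by (simp add: matrix_vector_mul_assoc matrix_inv_right[OF assms])

lemma matrix_inv_eqI:
  fixes A B :: "real^'m^'m"
  assumes AB: "A ** B = mat 1"
  shows "matrix_inv A = B"
proof -
  have "invertible A" using AB invertible_right_inverse by blast
  have "matrix_inv A = matrix_inv A ** (A ** B)" by (simp add: AB)
  also have "\<dots> = B" by (simp add: matrix_mul_assoc matrix_inv_left[OF \<open>invertible A\<close>])
  finally show ?thesis .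
qed

lemma invertible_if_kernel_trivial:
  fixes A :: "real^'m^'m"
  assumes "\<And>x. A *v x = 0 \<Longrightarrow> x = 0"
  shows "invertible A"
  using assms by (simp add: invertible_left_inverse matrix_left_invertible_ker)

lemma spd_invertible: "spd A \<Longrightarrow> invertible A"
  by (rule invertible_if_kernel_trivial) (force simp: spd_def)

lemma transpose_matrix_inv:
  fixes A :: "real^'m^'m"
  assumes "invertible A"
  shows "transpose (matrix_inv A) = matrix_inv (transpose A)"
  by (metis matrix_inv_eqI matrix_inv_left[OF assms] matrix_transpose_mul transpose_mat)

lemma minvsqrt_square:
  fixes A :: "real^'m^'m"
  assumes "spd A"
  shows "transpose (minvsqrt A) ** minvsqrt A = matrix_inv A"
proof -
  define S where "S = msqrt A"
  have S: "transpose S = S" "S ** S = A"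
    using msqrt[OF spd_imp_psd[OF assms]] psd_symmetric unfolding S_def by auto
  have "S ** (S ** matrix_inv A) = mat 1"
    using matrix_inv_right[OF spd_invertible[OF assms]] by (simp add: matrix_mul_assoc S)
  then have "invertible S" using invertible_right_inverse by blast
  have "A ** (matrix_inv S ** matrix_inv S) = mat 1"
    unfolding S(2)[symmetric] using matrix_inv_right[OF \<open>invertible S\<close>]
    by (metis matrix_mul_assoc matrix_mul_lid)
  then show ?thesis
    using transpose_matrix_inv[OF \<open>invertible S\<close>] matrix_inv_eqI
    unfolding minvsqrt_def S_def[symmetric] S(1) by metis
qed

lemma woodbury_inverse:
  fixes T :: "real^'n^'n" and U :: "real^'n^'r"
  assumes T: "invertible T" and Q: "invertible (T - transpose U ** U)"
  defines "W \<equiv> mat 1 - U ** matrix_inv T ** transpose U"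
  shows "invertible W"
    and "matrix_inv (T - transpose U ** U)
           = matrix_inv T + matrix_inv T ** transpose U ** matrix_inv W ** U ** matrix_inv T"
proof -
  define Ti where "Ti = matrix_inv T"
  have TTi: "T *v (Ti *v y) = y" for y
    using matrix_inv_right_vec[OF T] unfolding Ti_def .
  have Wv: "W *v z = z - U *v (Ti *v (transpose U *v z))" for z
    unfolding W_def Ti_def by (simp add: matrix_vector_mult_diff_rdistrib matrix_vector_mul_assoc[symmetric])
  have Qv: "(T - transpose U ** U) *v x = T *v x - transpose U *v (U *v x)" for x
    by (simp add: matrix_vector_mult_diff_rdistrib matrix_vector_mul_assoc[symmetric])
  show "invertible W"
  proof (rule invertible_if_kernel_trivial)
    fix z assume "W *v z = 0"
    then have z: "z = U *v (Ti *v (transpose U *v z))" unfolding Wv by simp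
    have "(T - transpose U ** U) *v (Ti *v (transpose U *v z)) = 0"
      unfolding Qv using z[symmetric] by (simp add: TTi)
    then have "Ti *v (transpose U *v z) = 0"
      using Q by (metis invertible_def matrix_left_invertible_ker)
    with z show "z = 0" by simp
  qed
  define Wi where "Wi = matrix_inv W"
  have WWi: "W *v (Wi *v y) = y" for y
    using matrix_inv_right_vec[OF \<open>invertible W\<close>] unfolding Wi_def .
  have "(T - transpose U ** U) *v ((Ti + Ti ** transpose U ** Wi ** U ** Ti) *v x) = x" for x
  proof -
    define a where "a = Ti *v x"
    define p where "p = Wi *v (U *v a)"
    have "U *v (Ti *v (transpose U *v p)) = p - U *v a"
      using WWi[of "U *v a"] unfolding Wv p_def by (simp add: algebra_simps)
    moreover have "(Ti + Ti ** transpose U ** Wi ** U ** Ti) *v x = a + Ti *v (transpose U *v p)"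
      unfolding a_def p_def by (simp add: matrix_vector_mult_add_rdistrib matrix_vector_mul_assoc[symmetric])
    ultimately show ?thesis
      unfolding Qv by (simp add: matrix_vector_right_distrib matrix_vector_mult_diff_distrib TTi a_def)
  qed
  then show "matrix_inv (T - transpose U ** U) = Ti + Ti ** transpose U ** Wi ** U ** Ti"
    by (intro matrix_inv_eqI) (simp add: matrix_eq matrix_vector_mul_assoc)
qed

subsection \<open>Orthogonal projection onto the range of a matrix in a weighted norm\<close>

text \<open>For symmetric \<open>M\<close>, \<open>mproj_coeffs M D v\<close> are the coefficients of the \<open>M\<close>-orthogonal
  projection of \<open>v\<close> onto the range of \<open>D\<close>, and \<open>qnorm2 (mproj_form M D) v\<close> is the squared
  \<open>M\<close>-norm of that projection.\<close>
definition mproj_coeffs :: "real^'n^'n \<Rightarrow> real^'r^'n \<Rightarrow> real^'n^'r" where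
  "mproj_coeffs M D = matrix_inv (transpose D ** M ** D) ** transpose D ** M"

definition mproj_form :: "real^'n^'n \<Rightarrow> real^'r^'n \<Rightarrow> real^'n^'n" where
  "mproj_form M D = M ** D ** mproj_coeffs M D"

lemma inj_matrix_vector_mult_if_independent_columns:
  fixes D :: "real^'r^'n"
  assumes "inj (\<lambda>j. column j D)" and "independent (columns D)"
  shows "inj ((*v) D)"
proof -
  have "columns D = range (\<lambda>j. column j D)" unfolding columns_def by auto
  then have "card (columns D) = CARD('r)" using assms(1) by (simp add: card_image)
  then have "rank D = CARD('r)"
    using assms(2) by (simp add: column_rank_def dim_eq_card_independent)
  then show ?thesis by (simp add: full_rank_injective)
qed

lemma spd_congruence:
  fixes M :: "real^'n^'n" and D :: "real^'r^'n"
  assumes M: "spd M" and D: "inj ((*v) D)"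
  shows "spd (transpose D ** M ** D)"
  unfolding spd_def
proof (intro conjI allI impI)
  show "transpose (transpose D ** M ** D) = transpose D ** M ** D"
    using M by (simp add: spd_def matrix_transpose_mul matrix_mul_assoc)
  fix w :: "real^'r" assume "w \<noteq> 0"
  then have "D *v w \<noteq> 0" using D by (metis inj_eq matrix_vector_mult_0_right)
  then have "0 < (D *v w) \<bullet> (M *v (D *v w))" using M by (simp add: spd_def)
  then show "0 < w \<bullet> ((transpose D ** M ** D) *v w)"
    by (simp only: inner_transpose_matrix_vector matrix_vector_mul_assoc[symmetric])
qed

lemma mproj_normal_equation:
  fixes M :: "real^'n^'n" and D :: "real^'r^'n"
  assumes "invertible (transpose D ** M ** D)"
  shows "transpose D *v (M *v (D *v (mproj_coeffs M D *v v))) = transpose D *v (M *v v)"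
proof -
  have "transpose D *v (M *v (D *v (mproj_coeffs M D *v v)))
      = (transpose D ** M ** D) *v (matrix_inv (transpose D ** M ** D) *v (transpose D *v (M *v v)))"
    unfolding mproj_coeffs_def by (simp only: matrix_vector_mul_assoc matrix_mul_assoc)
  then show ?thesis by (simp only: matrix_inv_right_vec[OF assms])
qed

lemma qnorm2_mproj_split:
  fixes M :: "real^'n^'n" and D :: "real^'r^'n"
  assumes M: "transpose M = M" and A: "invertible (transpose D ** M ** D)"
  defines "P \<equiv> mproj_coeffs M D"
  shows "qnorm2 M (v - D *v \<beta>)
           = qnorm2 M v - qnorm2 (mproj_form M D) v + qnorm2 M (D *v (P *v v - \<beta>))"
proof -
  define r where "r = v - D *v (P *v v)"
  have "transpose D *v (M *v r) = 0"
    unfolding r_def P_def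
    by (simp only: matrix_vector_mult_diff_distrib mproj_normal_equation[OF A] diff_self)
  then have orth: "(D *v \<delta>) \<bullet> (M *v r) = 0" for \<delta>
    by (metis inner_transpose_matrix_vector inner_zero_right)
  have "v - D *v \<beta> = r + D *v (P *v v - \<beta>)"
    unfolding r_def by (simp add: matrix_vector_mult_diff_distrib)
  then have "qnorm2 M (v - D *v \<beta>) = qnorm2 M r + qnorm2 M (D *v (P *v v - \<beta>))"
    using orth by (simp add: qnorm2_add[OF M])
  moreover have "qnorm2 M r = qnorm2 M v - qnorm2 (mproj_form M D) v"
  proof -
    have "qnorm2 M r = r \<bullet> (M *v v)"
      using orth[of "P *v v"] symmetric_matrix_inner[OF M, of r "D *v (P *v v)"]
      unfolding qnorm2_def r_def by (simp add: matrix_vector_mult_diff_distrib inner_diff_right)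
    also have "\<dots> = qnorm2 M v - v \<bullet> (M *v (D *v (P *v v)))"
      using symmetric_matrix_inner[OF M, of v "D *v (P *v v)"]
      unfolding r_def qnorm2_def by (simp add: inner_diff_left)
    finally show ?thesis
      unfolding mproj_form_def P_def qnorm2_def by (simp add: matrix_vector_mul_assoc matrix_mul_assoc)
  qed
  ultimately show ?thesis by simp
qed

lemma mproj_form_symmetric:
  fixes M :: "real^'n^'n" and D :: "real^'r^'n"
  assumes M: "transpose M = M" and A: "invertible (transpose D ** M ** D)"
  shows "transpose (mproj_form M D) = mproj_form M D"
proof -
  have "transpose (transpose D ** M ** D) = transpose D ** M ** D"
    using M by (simp add: matrix_transpose_mul matrix_mul_assoc)
  then show ?thesis
    using transpose_matrix_inv[OF A] M
    by (simp add: mproj_form_def mproj_coeffs_def matrix_transpose_mul matrix_mul_assoc)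
qed

lemma rank_mproj_form:
  fixes M :: "real^'n^'n" and D :: "real^'r^'n"
  assumes A: "invertible (transpose D ** M ** D)"
  shows "rank (mproj_form M D) = CARD('r)"
proof (rule antisym)
  have "rank (mproj_form M D) \<le> rank (M ** D)"
    unfolding mproj_form_def by (rule rank_mul_le_left)
  also have "\<dots> \<le> CARD('r)" using rank_bound by (metis min.bounded_iff)
  finally show "rank (mproj_form M D) \<le> CARD('r)" .
  have "transpose D ** mproj_form M D ** D = transpose D ** M ** D"
    using matrix_inv_right[OF A]
    by (simp add: mproj_form_def mproj_coeffs_def matrix_mul_assoc)
  then have "CARD('r) = rank (transpose D ** mproj_form M D ** D)"
    using A by (metis full_rank_injective invertible_left_inverse matrix_left_invertible_injective)
  also have "\<dots> \<le> rank (mproj_form M D)"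
    by (metis rank_mul_le_left rank_mul_le_right order_trans)
  finally show "CARD('r) \<le> rank (mproj_form M D)" .
qed

lemma spd_sub_mproj_form:
  fixes H M :: "real^'n^'n" and D :: "real^'r^'n"
  assumes H: "spd H" and M: "psd M" and A: "invertible (transpose D ** M ** D)"
  shows "spd (H + M - mproj_form M D)"
  unfolding spd_def
proof (intro conjI allI impI)
  have "transpose H = H" "transpose M = M" using H M by (auto simp: spd_def psd_def)
  then show "transpose (H + M - mproj_form M D) = H + M - mproj_form M D"
    using mproj_form_symmetric[OF _ A] by (simp add: transpose_def vec_eq_iff)
  fix x :: "real^'n" assume "x \<noteq> 0"
  then have "0 < qnorm2 H x" using H by (simp add: spd_def qnorm2_def)
  moreover have "qnorm2 M x - qnorm2 (mproj_form M D) x = qnorm2 M (x - D *v (mproj_coeffs M D *v x))"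
    using qnorm2_mproj_split[OF \<open>transpose M = M\<close> A] by (simp add: qnorm2_def)
  moreover have "qnorm2 M (x - D *v (mproj_coeffs M D *v x)) \<ge> 0"
    using M by (simp add: psd_def qnorm2_def)
  ultimately show "0 < x \<bullet> ((H + M - mproj_form M D) *v x)"
    by (simp add: qnorm2_def matrix_vector_mult_add_rdistrib matrix_vector_mult_diff_rdistrib
        inner_add_right inner_diff_right)
qed

lemma minvsqrt_factor_mproj_form:
  fixes M :: "real^'n^'n" and D :: "real^'r^'n"
  assumes M: "transpose M = M" and A: "spd (transpose D ** M ** D)"
  defines "U \<equiv> minvsqrt (transpose D ** M ** D) ** transpose D ** M"
  shows "transpose U ** U = mproj_form M D"
proof -
  define S where "S = minvsqrt (transpose D ** M ** D)"
  have "transpose U ** U = (M ** D) ** (transpose S ** S) ** (transpose D ** M)"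
    unfolding U_def S_def[symmetric] by (simp add: matrix_transpose_mul M matrix_mul_assoc)
  then show ?thesis
    unfolding S_def minvsqrt_square[OF A] by (simp add: mproj_form_def mproj_coeffs_def matrix_mul_assoc)
qed

subsection \<open>Quadratic functions\<close>

lemma grad_quadratic:
  fixes H :: "real^'n^'n"
  assumes H: "transpose H = H" and f: "\<forall>x. f x = 1/2 * (x \<bullet> (H *v x)) + b \<bullet> x + c"
  shows "grad f z = H *v z + b"
proof -
  have "f = (\<lambda>x. 1/2 * (x \<bullet> (H *v x)) + b \<bullet> x + c)" using f by auto
  then have "(f has_derivative (\<lambda>h. 1/2 * (h \<bullet> (H *v z) + z \<bullet> (H *v h)) + b \<bullet> h)) (at z)"
    by (auto intro!: derivative_eq_intros bounded_linear.has_derivative[OF matrix_vector_mul_bounded_linear]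
        simp: algebra_simps)
  then have "frechet_derivative f (at z) = (\<lambda>h. h \<bullet> (H *v z) + b \<bullet> h)"
    using frechet_derivative_at symmetric_matrix_inner[OF H, of z] by fastforce
  then show ?thesis
    unfolding grad_def by (simp add: vec_eq_iff inner_axis' inner_axis)
qed

lemma quadratic_expansion:
  fixes H :: "real^'n^'n"
  assumes H: "transpose H = H" and f: "\<forall>x. f x = 1/2 * (x \<bullet> (H *v x)) + b \<bullet> x + c"
  shows "f x = f y + (H *v y + b) \<bullet> (x - y) + 1/2 * qnorm2 H (x - y)"
proof -
  have "qnorm2 H x = qnorm2 H y + 2 * ((x - y) \<bullet> (H *v y)) + qnorm2 H (x - y)"
    using qnorm2_add[OF H, of y "x - y"] by simp
  then show ?thesis
    using f by (simp add: qnorm2_def inner_diff_right inner_add_left inner_commute algebra_simps)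
qed

lemma linearization_prox_quadratic:
  fixes H T :: "real^'n^'n"
  assumes H: "transpose H = H" and f: "\<forall>x. f x = 1/2 * (x \<bullet> (H *v x)) + b \<bullet> x + c"
  shows "f y + grad f y \<bullet> (x - y) + 1/2 * qnorm2 T (x - y) = f x + 1/2 * qnorm2 (T - H) (x - y)"
  using quadratic_expansion[OF H f, of x y]
  by (simp add: grad_quadratic[OF H f] qnorm2_def matrix_vector_mult_diff_rdistrib
      inner_diff_right algebra_simps)

lemma qnorm2_complete_square:
  fixes Q :: "real^'n^'n"
  assumes Q: "transpose Q = Q" "invertible Q"
  shows "qnorm2 Q (v + matrix_inv Q *v G) = qnorm2 Q v + 2 * (G \<bullet> v) + (matrix_inv Q *v G) \<bullet> G"
  using qnorm2_add[OF Q(1), of v "matrix_inv Q *v G"] symmetric_matrix_inner[OF Q(1), of v "matrix_inv Q *v G"]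
  by (simp add: qnorm2_def matrix_inv_right_vec[OF Q(2)] inner_commute)

lemma prox_linear_model_decomposition:
  fixes H T :: "real^'n^'n" and D :: "real^'r^'n" and f :: "real^'n \<Rightarrow> real"
    and xk :: "real^'n" and \<beta> :: "real^'r"
  defines "M \<equiv> T - H" and "Q \<equiv> T - mproj_form (T - H) D" and "G \<equiv> grad f xk"
    and "y \<equiv> xk + D *v \<beta>"
  assumes H: "transpose H = H" and T: "transpose T = T"
    and f: "\<forall>x. f x = 1/2 * (x \<bullet> (H *v x)) + b \<bullet> x + c"
    and A: "invertible (transpose D ** M ** D)" and "invertible Q"
  shows "f y + grad f y \<bullet> (x - y) + 1/2 * qnorm2 T (x - y)
           = 1/2 * qnorm2 Q (x - xk + matrix_inv Q *v G) + (f xk - 1/2 * ((matrix_inv Q *v G) \<bullet> G))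
             + 1/2 * qnorm2 M (D *v (mproj_coeffs M D *v (x - xk) - \<beta>))"
proof -
  define v where "v = x - xk"
  have M: "transpose M = M" using H T unfolding M_def by (simp add: transpose_def vec_eq_iff)
  have "transpose Q = Q"
    using T mproj_form_symmetric[OF M A] unfolding Q_def M_def by (simp add: transpose_def vec_eq_iff)
  have Qv: "qnorm2 Q v = qnorm2 H v + qnorm2 M v - qnorm2 (mproj_form M D) v"
    unfolding Q_def M_def
    by (simp add: qnorm2_def matrix_vector_mult_diff_rdistrib inner_diff_right)
  have "f y + grad f y \<bullet> (x - y) + 1/2 * qnorm2 T (x - y) = f x + 1/2 * qnorm2 M (v - D *v \<beta>)"
    unfolding linearization_prox_quadratic[OF H f] M_def v_def y_def by (simp add: algebra_simps)
  also have "\<dots> = f xk + G \<bullet> v + 1/2 * qnorm2 Q v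
      + 1/2 * qnorm2 M (D *v (mproj_coeffs M D *v v - \<beta>))"
    using Qv unfolding qnorm2_mproj_split[OF M A] quadratic_expansion[OF H f, of x xk] G_def
      grad_quadratic[OF H f] v_def by (simp add: algebra_simps)
  also have "\<dots> = 1/2 * qnorm2 Q (v + matrix_inv Q *v G) + (f xk - 1/2 * ((matrix_inv Q *v G) \<bullet> G))
      + 1/2 * qnorm2 M (D *v (mproj_coeffs M D *v v - \<beta>))"
    unfolding qnorm2_complete_square[OF \<open>transpose Q = Q\<close> \<open>invertible Q\<close>]
    by (simp add: field_simps)
  finally show ?thesis unfolding v_def by (simp add: diff_add_eq)
qed

theorem mainTheorem1:
  fixes g :: "real^'n \<Rightarrow> ereal"
    and f :: "real^'n \<Rightarrow> real"
    and L H T :: "real^'n^'n"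
    and b xk :: "real^'n"
    and c :: real
    and D :: "real^'r^'n"
  assumes g_proper: "proper_fun g"
    and g_lsc: "lsc g"
    and f_diff: "\<forall>x. f differentiable (at x)"
    and f_C1: "continuous_on UNIV (grad f)"
    and L_spd: "spd L"
    and f_Lip: "1-lipschitz_on UNIV (grad (\<lambda>z. f (minvsqrt L *v z)))"
    and bdd_below: "\<exists>m::real. \<forall>x. ereal m \<le> ereal (f x) + g x"
    and f_quad: "\<forall>x. f x = 1/2 * (x \<bullet> (H *v x)) + b \<bullet> x + c"
    and H_spd: "spd H"
    and D_indep: "inj (\<lambda>j. column j D) \<and> independent (columns D)"
    and T_spd: "spd T"
    and M_spd: "spd (T - H)"
  defines "Phi \<equiv> (\<lambda>x (\<beta>::real^'r). g x + ereal (f (xk + D *v \<beta>)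
                 + grad f (xk + D *v \<beta>) \<bullet> (x - (xk + D *v \<beta>)))
               + ereal (1/2 * qnorm2 T (x - (xk + D *v \<beta>))))"
    and "U \<equiv> minvsqrt (transpose D ** (T - H) ** D) ** transpose D ** (T - H)"
  shows "(\<forall>x. \<forall>\<beta>. Phi x (matrix_inv (transpose D ** (T - H) ** D) ** transpose D ** (T - H) *v (x - xk))
                    \<le> Phi x \<beta>)
       \<and> (\<forall>x. (\<exists>\<beta>. \<forall>x' \<beta>'. Phi x \<beta> \<le> Phi x' \<beta>') \<longleftrightarrow>
              (\<forall>x'. g x + ereal (1/2 * qnorm2 (T - transpose U ** U)
                          (x - xk + matrix_inv (T - transpose U ** U) *v grad f xk))
                    \<le> g x' + ereal (1/2 * qnorm2 (T - transpose U ** U)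
                          (x' - xk + matrix_inv (T - transpose U ** U) *v grad f xk))))
       \<and> spd (T - transpose U ** U)
       \<and> rank (transpose U ** U) = CARD('r)
       \<and> invertible (mat 1 - U ** matrix_inv T ** transpose U)
       \<and> matrix_inv (T - transpose U ** U) = matrix_inv T + matrix_inv T ** transpose U
            ** matrix_inv (mat 1 - U ** matrix_inv T ** transpose U) ** U ** matrix_inv T"
proof -
  define M where "M = T - H"
  define Q where "Q = T - transpose U ** U"
  have H: "transpose H = H" and T: "transpose T = T" and "psd M"
    using H_spd T_spd M_spd spd_imp_psd unfolding spd_def M_def by auto
  have "spd (transpose D ** M ** D)"
    using spd_congruence[OF M_spd] inj_matrix_vector_mult_if_independent_columns D_indep
    unfolding M_def by blast
  then have A: "invertible (transpose D ** M ** D)" by (rule spd_invertible)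
  have UU: "transpose U ** U = mproj_form M D"
    using minvsqrt_factor_mproj_form \<open>spd (transpose D ** M ** D)\<close> \<open>psd M\<close>
    unfolding U_def M_def psd_def by blast
  have "spd Q"
    using spd_sub_mproj_form[OF H_spd \<open>psd M\<close> A] unfolding Q_def UU M_def by simp
  define P where "P x = g x + ereal (1/2 * qnorm2 Q (x - xk + matrix_inv Q *v grad f xk))" for x
  define r where "r x \<beta> = 1/2 * qnorm2 M (D *v (mproj_coeffs M D *v (x - xk) - \<beta>))" for x \<beta>
  have Phi: "Phi x \<beta> = P x + ereal (f xk - 1/2 * ((matrix_inv Q *v grad f xk) \<bullet> grad f xk) + r x \<beta>)" for x \<beta>
    using prox_linear_model_decomposition[OF H T f_quad, of D xk \<beta> x] A spd_invertible[OF \<open>spd Q\<close>]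
    unfolding Phi_def P_def r_def Q_def UU M_def by (simp add: add.assoc)
  have r_nonneg: "0 \<le> r x \<beta>" for x \<beta> using \<open>psd M\<close> by (simp add: r_def qnorm2_def psd_def)
  have r_opt: "r x (mproj_coeffs M D *v (x - xk)) = 0" for x by (simp add: r_def qnorm2_def)
  have "rank (transpose U ** U) = CARD('r)" using rank_mproj_form[OF A] UU by simp
  moreover note woodbury_inverse[OF spd_invertible[OF T_spd] spd_invertible[OF \<open>spd Q\<close>[unfolded Q_def]]]
  ultimately show ?thesis
    using partial_minimization[where Phi = Phi and P = P and r = r, OF Phi r_nonneg r_opt] \<open>spd Q\<close>
    unfolding M_def[symmetric] mproj_coeffs_def[symmetric] Q_def[symmetric] P_def by blast
qed

end
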